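(* Let $C$ be a complete structured DNNF, $g$ a var-gate or $\times$-gate of $C$, and $S\in S(g)$. Then the box of $g$ is the (unique) least common ancestor, in the tree of boxes, of the boxes containing the var-gates whose variables occur in $S$.
   Context: A set circuit $C=(G,W,\mu)$ is a finite DAG with gates $G$, wires $W\subseteq G\times G$, gate types $\mu(g)\in\{\top,\bot,\mathrm{var},\times,\cup\}$, and an injective map $S_{\mathrm{var}}$ giving each var-gate a set of variables; $C_{\mathrm{var}}$ is the union of all $S_{\mathrm{var}}(g)$. Inputs of $g$ are the $g'$ with $(g',g)\in W$; $\top,\bot,\mathrm{var}$-gates have no inputs, $\times$-gates exactly two, $\cup$-gates at least one, and $\top,\bot$-gates are never inputs of any gate. Captured sets: $S(g)=\{S_{\mathrm{var}}(g)\}$ for var-gates, $\emptyset$ for $\bot$, $\{\emptyset\}$ for $\top$, $\{S_1\cup S_2\mid S_1\in S(g_1),S_2\in S(g_2)\}$ for a $\times$-gate with inputs $g_1,g_2$, the union over inputs for $\cup$-gates. A v-tree $\mathcal{T}$ for $C$ is a binary tree whose leaves are labeled by sets of variables forming a partition of $C_{\mathrm{var}}$. A structuring function $\sigma$ from $C$ to $\mathcal{T}$ maps each var-gate $g$ to a leaf whose label contains $S_{\mathrm{var}}(g)$, ensures that for each wire $(g',g)$ either $\sigma(g')=\sigma(g)$ or $g'$ is a $\cup$-gate with $\sigma(g')$ a child of $\sigma(g)$, and that each $\times$-gate $g$ has one input mapped to the left child and one to the right child of $\sigma(g)$. A complete structured DNNF is $C$ with such $\mathcal{T}$ and $\sigma$.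 The box of a gate $g$ is $\sigma^{-1}(\sigma(g))$; the boxes $\sigma^{-1}(m)$ for nodes $m$ of $\mathcal{T}$ form a tree (the tree of boxes) isomorphic to $\mathcal{T}$. *)

theory Defs
  imports Main
begin

datatype gate_type = GTop | GBot | GVar | GTimes | GUnion

record ('g, 'v) set_circuit =
  gates :: "'g set"
  wires :: "('g \<times> 'g) set"
  gtype :: "'g \<Rightarrow> gate_type"
  svar  :: "'g \<Rightarrow> 'v set"

definition inputs :: "('g, 'v) set_circuit \<Rightarrow> 'g \<Rightarrow> 'g set" where
  "inputs C g = {g'. (g', g) \<in> wires C}"

definition var_gates :: "('g, 'v) set_circuit \<Rightarrow> 'g set" where
  "var_gates C = {g \<in> gates C. gtype C g = GVar}"

definition circuit_vars :: "('g, 'v) set_circuit \<Rightarrow> 'v set" where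
  "circuit_vars C = (\<Union>g \<in> var_gates C. svar C g)"

definition set_circuit :: "('g, 'v) set_circuit \<Rightarrow> bool" where
  "set_circuit C \<longleftrightarrow>
     finite (gates C) \<and>
     wires C \<subseteq> gates C \<times> gates C \<and>
     acyclic (wires C) \<and>
     (\<forall>g \<in> gates C. gtype C g \<in> {GTop, GBot, GVar} \<longrightarrow> inputs C g = {}) \<and>
     (\<forall>g \<in> gates C. gtype C g = GTimes \<longrightarrow> card (inputs C g) = 2) \<and>
     (\<forall>g \<in> gates C. gtype C g = GUnion \<longrightarrow> inputs C g \<noteq> {}) \<and>
     (\<forall>(g', g) \<in> wires C. gtype C g' \<notin> {GTop, GBot}) \<and>
     inj_on (svar C) (var_gates C)"

text \<open>captures C g S  means  S is in S(g). Inductive definition; on a finite DAG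
  this coincides with the recursive definition of captured sets.\<close>
inductive captures :: "('g, 'v) set_circuit \<Rightarrow> 'g \<Rightarrow> 'v set \<Rightarrow> bool" for C where
  cap_var: "\<lbrakk>g \<in> gates C; gtype C g = GVar\<rbrakk> \<Longrightarrow> captures C g (svar C g)"
| cap_top: "\<lbrakk>g \<in> gates C; gtype C g = GTop\<rbrakk> \<Longrightarrow> captures C g {}"
| cap_times: "\<lbrakk>g \<in> gates C; gtype C g = GTimes; inputs C g = {g1, g2}; g1 \<noteq> g2;
               captures C g1 S1; captures C g2 S2\<rbrakk> \<Longrightarrow> captures C g (S1 \<union> S2)"
| cap_union: "\<lbrakk>g \<in> gates C; gtype C g = GUnion; g' \<in> inputs C g; captures C g' S\<rbrakk>
               \<Longrightarrow> captures C g S"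

datatype 'v vtree = VLeaf "'v set" | VNode "'v vtree" "'v vtree"

text \<open>Nodes are addressed by positions: False = left child, True = right child.\<close>
fun positions :: "'v vtree \<Rightarrow> bool list set" where
  "positions (VLeaf A) = {[]}"
| "positions (VNode l r) = {[]} \<union> Cons False ` positions l \<union> Cons True ` positions r"

fun subtree_at :: "'v vtree \<Rightarrow> bool list \<Rightarrow> 'v vtree option" where
  "subtree_at t [] = Some t"
| "subtree_at (VLeaf A) (b # p) = None"
| "subtree_at (VNode l r) (b # p) = subtree_at (if b then r else l) p"

definition leaf_label :: "'v vtree \<Rightarrow> bool list \<Rightarrow> 'v set \<Rightarrow> bool" where
  "leaf_label T p A \<longleftrightarrow> subtree_at T p = Some (VLeaf A)"

definition is_vtree_for :: "('g, 'v) set_circuit \<Rightarrow> 'v vtree \<Rightarrow> bool" where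
  "is_vtree_for C T \<longleftrightarrow>
     (\<forall>p A. leaf_label T p A \<longrightarrow> A \<noteq> {}) \<and>
     (\<forall>p q A B. leaf_label T p A \<and> leaf_label T q B \<and> p \<noteq> q \<longrightarrow> A \<inter> B = {}) \<and>
     (\<Union>{A. \<exists>p. leaf_label T p A} = circuit_vars C)"

definition ancestor :: "bool list \<Rightarrow> bool list \<Rightarrow> bool" where
  "ancestor p q \<longleftrightarrow> (\<exists>r. q = p @ r)"

definition is_lca :: "'v vtree \<Rightarrow> bool list set \<Rightarrow> bool list \<Rightarrow> bool" where
  "is_lca T N m \<longleftrightarrow> m \<in> positions T \<and> (\<forall>n \<in> N. ancestor m n) \<and>
     (\<forall>m' \<in> positions T. (\<forall>n \<in> N. ancestor m' n) \<longrightarrow> ancestor m' m)"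

definition structuring :: "('g, 'v) set_circuit \<Rightarrow> 'v vtree \<Rightarrow> ('g \<Rightarrow> bool list) \<Rightarrow> bool" where
  "structuring C T \<sigma> \<longleftrightarrow>
     (\<forall>g \<in> gates C. \<sigma> g \<in> positions T) \<and>
     (\<forall>g \<in> var_gates C. \<exists>A. leaf_label T (\<sigma> g) A \<and> svar C g \<subseteq> A) \<and>
     (\<forall>(g', g) \<in> wires C. \<sigma> g' = \<sigma> g \<or>
        (gtype C g' = GUnion \<and> (\<sigma> g' = \<sigma> g @ [False] \<or> \<sigma> g' = \<sigma> g @ [True]))) \<and>
     (\<forall>g \<in> gates C. gtype C g = GTimes \<longrightarrow>
        (\<exists>g1 g2. inputs C g = {g1, g2} \<and> \<sigma> g1 = \<sigma> g @ [False] \<and> \<sigma> g2 = \<sigma> g @ [True]))"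

definition complete_sdnnf :: "('g, 'v) set_circuit \<Rightarrow> 'v vtree \<Rightarrow> ('g \<Rightarrow> bool list) \<Rightarrow> bool" where
  "complete_sdnnf C T \<sigma> \<longleftrightarrow> set_circuit C \<and> is_vtree_for C T \<and> structuring C T \<sigma>"

definition node_box :: "('g, 'v) set_circuit \<Rightarrow> ('g \<Rightarrow> bool list) \<Rightarrow> bool list \<Rightarrow> 'g set" where
  "node_box C \<sigma> m = {g' \<in> gates C. \<sigma> g' = m}"

definition box :: "('g, 'v) set_circuit \<Rightarrow> ('g \<Rightarrow> bool list) \<Rightarrow> 'g \<Rightarrow> 'g set" where
  "box C \<sigma> g = node_box C \<sigma> (\<sigma> g)"

end

theory Submission
  imports Defs "HOL-Library.Sublist"
begin

text \<open>Every variable of a set captured at g lives in a leaf below the node of g, and the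
  leaves are pairwise disjoint, so the node of g is an ancestor of every var-gate whose
  (nonempty) variable set occurs in S. Conversely, if g is a var-gate its own node is
  among these, and if g is a \<open>\<times>\<close>-gate each of its two inputs contributes such a
  var-gate, one in the left and one in the right subtree of the node of g; a common
  ancestor of these two lies above the node of g.\<close>

lemma ancestor_eq_prefix: "ancestor = prefix"
  by (simp add: ancestor_def prefix_def fun_eq_iff)

lemma ancestor_refl: "ancestor p p"
  by (simp add: ancestor_eq_prefix)

lemma ancestor_trans: "ancestor p q \<Longrightarrow> ancestor q r \<Longrightarrow> ancestor p r"
  unfolding ancestor_eq_prefix by (rule prefix_order.trans)

lemma ancestor_antisym: "ancestor p q \<Longrightarrow> ancestor q p \<Longrightarrow> p = q"
  unfolding ancestor_eq_prefix by (rule prefix_order.antisym)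

lemma ancestor_of_left_and_right_descendant:
  assumes "ancestor m (p @ False # r1)" and "ancestor m (p @ True # r2)"
  shows "ancestor m p"
proof -
  have "prefix m p \<or> prefix p m"
    using assms(1) prefix_same_cases[of m "p @ False # r1" p] by (simp add: ancestor_eq_prefix)
  moreover have "m \<noteq> p @ c # z" for c z
    using assms by (cases c) (auto simp: ancestor_eq_prefix)
  ultimately show ?thesis
    by (metis ancestor_eq_prefix append_Nil2 neq_Nil_conv prefix_def)
qed

lemma is_lca_unique: "is_lca T N m \<Longrightarrow> is_lca T N m' \<Longrightarrow> m = m'"
  unfolding is_lca_def by (blast intro: ancestor_antisym)

lemma structuring_input_ancestor:
  assumes "structuring C T \<sigma>" and "g' \<in> inputs C g"
  shows "ancestor (\<sigma> g) (\<sigma> g')"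
  using assms unfolding structuring_def inputs_def ancestor_def by fastforce

lemma set_circuit_input_not_top:
  assumes "set_circuit C" and "g' \<in> inputs C g"
  shows "gtype C g' \<noteq> GTop"
  using assms unfolding set_circuit_def inputs_def by fastforce

lemma captures_subset_leaves_below:
  assumes "structuring C T \<sigma>" and "captures C h S"
  shows "S \<subseteq> \<Union>{A. \<exists>p. leaf_label T p A \<and> ancestor (\<sigma> h) p}"
  using assms(2)
proof (induction rule: captures.induct)
  case (cap_var g)
  then have "g \<in> var_gates C" by (simp add: var_gates_def)
  then show ?case using assms(1) ancestor_refl unfolding structuring_def by blast
next
  case (cap_top g)
  then show ?case by simp
next
  case (cap_times g g1 g2 S1 S2)
  then have "ancestor (\<sigma> g) (\<sigma> g1)" "ancestor (\<sigma> g) (\<sigma> g2)"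
    using structuring_input_ancestor[OF assms(1)] by auto
  then show ?case using cap_times.IH ancestor_trans by blast
next
  case (cap_union g g' S)
  then have "ancestor (\<sigma> g) (\<sigma> g')"
    using structuring_input_ancestor[OF assms(1)] by auto
  then show ?case using cap_union.IH ancestor_trans by blast
qed

lemma captured_var_gate_below:
  assumes "is_vtree_for C T" and "structuring C T \<sigma>" and "captures C h S"
    and "g' \<in> var_gates C" and "svar C g' \<noteq> {}" and "svar C g' \<subseteq> S"
  shows "ancestor (\<sigma> h) (\<sigma> g')"
proof -
  obtain v where v: "v \<in> svar C g'" using assms(5) by blast
  then obtain p A where pA: "leaf_label T p A" "ancestor (\<sigma> h) p" "v \<in> A"
    using captures_subset_leaves_below[OF assms(2,3)] assms(6) by blast
  obtain B where B: "leaf_label T (\<sigma> g') B" "svar C g' \<subseteq> B"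
    using assms(2,4) unfolding structuring_def by blast
  have "p = \<sigma> g'"
    using assms(1) pA(1,3) B v unfolding is_vtree_for_def by blast
  then show ?thesis using pA(2) by simp
qed

lemma captures_has_var_gate_below:
  assumes "set_circuit C" and "structuring C T \<sigma>"
    and "captures C h S" and "gtype C h \<noteq> GTop"
  shows "\<exists>g' \<in> var_gates C. svar C g' \<subseteq> S \<and> ancestor (\<sigma> h) (\<sigma> g')"
  using assms(3,4)
proof (induction rule: captures.induct)
  case (cap_var g)
  then have "g \<in> var_gates C" by (simp add: var_gates_def)
  then show ?case using ancestor_refl by blast
next
  case (cap_top g)
  then show ?case by simp
next
  case (cap_times g g1 g2 S1 S2)
  then have "g1 \<in> inputs C g" by simp
  then have "ancestor (\<sigma> g) (\<sigma> g1)" and "gtype C g1 \<noteq> GTop"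
    using structuring_input_ancestor[OF assms(2)] set_circuit_input_not_top[OF assms(1)] by auto
  then show ?case using cap_times.IH(1) ancestor_trans by blast
next
  case (cap_union g g' S)
  then have "ancestor (\<sigma> g) (\<sigma> g')" and "gtype C g' \<noteq> GTop"
    using structuring_input_ancestor[OF assms(2)] set_circuit_input_not_top[OF assms(1)] by auto
  then show ?case using cap_union.IH ancestor_trans by blast
qed

lemma captures_times_gate_input:
  assumes "captures C g S" and "gtype C g = GTimes" and "x \<in> inputs C g"
  shows "\<exists>S'. captures C x S' \<and> S' \<subseteq> S"
  using assms by (cases rule: captures.cases) auto

lemma captures_at_var_gate:
  assumes "captures C g S" and "gtype C g = GVar"
  shows "S = svar C g"
  using assms by (cases rule: captures.cases) auto

definition var_gate_positions :: "('g, 'v) set_circuit \<Rightarrow> ('g \<Rightarrow> bool list) \<Rightarrow> 'v set \<Rightarrow> bool list set" where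
  "var_gate_positions C \<sigma> S = {\<sigma> g' | g'. g' \<in> var_gates C \<and> svar C g' \<subseteq> S}"

lemma common_ancestor_above_times_gate:
  assumes "set_circuit C" and "structuring C T \<sigma>"
    and "g \<in> gates C" and "gtype C g = GTimes" and "captures C g S"
    and "\<forall>n \<in> var_gate_positions C \<sigma> S. ancestor m n"
  shows "ancestor m (\<sigma> g)"
proof -
  have below_input: "\<exists>n \<in> var_gate_positions C \<sigma> S. ancestor (\<sigma> x) n"
    if x_input: "x \<in> inputs C g" for x
  proof -
    obtain S' where S': "captures C x S'" "S' \<subseteq> S"
      using captures_times_gate_input[OF assms(5,4) x_input] by blast
    obtain g' where "g' \<in> var_gates C" "svar C g' \<subseteq> S'" "ancestor (\<sigma> x) (\<sigma> g')"
      using captures_has_var_gate_below[OF assms(1,2) S'(1) set_circuit_input_not_top[OF assms(1) x_input]]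
      by blast
    then show ?thesis
      using S'(2) unfolding var_gate_positions_def by blast
  qed
  obtain a b where ab: "inputs C g = {a, b}" "\<sigma> a = \<sigma> g @ [False]" "\<sigma> b = \<sigma> g @ [True]"
    using assms(2,3,4) unfolding structuring_def by blast
  obtain r1 where "\<sigma> g @ False # r1 \<in> var_gate_positions C \<sigma> S"
    using below_input[of a] ab(1,2) by (auto simp: ancestor_def)
  moreover obtain r2 where "\<sigma> g @ True # r2 \<in> var_gate_positions C \<sigma> S"
    using below_input[of b] ab(1,3) by (auto simp: ancestor_def)
  ultimately show ?thesis
    using assms(6) ancestor_of_left_and_right_descendant by blast
qed

lemma var_or_times_gate_is_lca:
  assumes "complete_sdnnf C T \<sigma>"
    and "\<forall>g' \<in> var_gates C. svar C g' \<noteq> {}"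
    and "g \<in> gates C" and "gtype C g \<in> {GVar, GTimes}"
    and "captures C g S"
  shows "is_lca T (var_gate_positions C \<sigma> S) (\<sigma> g)"
proof -
  have circuit: "set_circuit C" and vtree: "is_vtree_for C T" and struct: "structuring C T \<sigma>"
    using assms(1) by (auto simp: complete_sdnnf_def)
  have "\<sigma> g \<in> positions T"
    using struct assms(3) by (auto simp: structuring_def)
  moreover have "\<forall>n \<in> var_gate_positions C \<sigma> S. ancestor (\<sigma> g) n"
    using captured_var_gate_below[OF vtree struct assms(5)] assms(2)
    unfolding var_gate_positions_def by blast
  moreover have "ancestor m (\<sigma> g)" if "\<forall>n \<in> var_gate_positions C \<sigma> S. ancestor m n" for m
  proof (cases "gtype C g = GVar")
    case True
    then have "\<sigma> g \<in> var_gate_positions C \<sigma> S"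
      using assms(3) captures_at_var_gate[OF assms(5)]
      unfolding var_gate_positions_def var_gates_def by blast
    then show ?thesis using that by blast
  next
    case False
    then show ?thesis
      using common_ancestor_above_times_gate[OF circuit struct assms(3) _ assms(5) that] assms(4)
      by simp
  qed
  ultimately show ?thesis unfolding is_lca_def by blast
qed

theorem lemma5p1:
  fixes C :: "('g, 'v) set_circuit" and T :: "'v vtree" and \<sigma> :: "'g \<Rightarrow> bool list"
  assumes "complete_sdnnf C T \<sigma>"
    and "\<forall>g' \<in> var_gates C. svar C g' \<noteq> {}"
    and "g \<in> gates C" and "gtype C g \<in> {GVar, GTimes}"
    and "captures C g S"
  shows "\<exists>!m. is_lca T {\<sigma> g' | g'. g' \<in> var_gates C \<and> svar C g' \<subseteq> S} m
              \<and> box C \<sigma> g = node_box C \<sigma> m"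
proof -
  have "is_lca T (var_gate_positions C \<sigma> S) (\<sigma> g)"
    using var_or_times_gate_is_lca[OF assms] .
  then show ?thesis
    unfolding var_gate_positions_def[symmetric] box_def
    using is_lca_unique by blast
qed

end
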